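(* For all integers $n\ge 1$ and $\ell\ge 2$, \[\binom{n}{2}-(n-1)\le \max(n,\ell)\le \binom{n}{2}-\left\lfloor\frac{n}{2}\right\rfloor.\]
   Context: All graphs are finite and simple. Vertex labels lie in $\mathbb{Z}_\ell$. In the neighborhood Lights Out game on a graph $G$, one starts with a labeling $V(G)\to\mathbb{Z}_\ell$; toggling a vertex $v$ adds $1$ (mod $\ell$) to the label of every vertex in the closed neighborhood $N[v]$; the game is won when every label is $0$. $G$ is $N$-AW (always winnable) if the game can be won from every initial labeling. $\max(n,\ell)$ is the maximum number of edges of an $N$-AW graph on $n$ vertices. *)

theory Defs
  imports Main
begin

definition simple_graph :: "nat \<Rightarrow> nat set set \<Rightarrow> bool" where
  "simple_graph n E \<longleftrightarrow> E \<subseteq> {{u, v} | u v. u < n \<and> v < n \<and> u \<noteq> v}"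

definition closed_nbhd :: "nat set set \<Rightarrow> nat \<Rightarrow> nat set" where
  "closed_nbhd E v = insert v {u. {u, v} \<in> E}"

text \<open>The labeling f (labels in Z_l, represented by 0..l-1) can be turned to all zeros
  by toggling each vertex v exactly t v times (the order of toggles is irrelevant;
  toggling v adds 1 mod l to every label in N[v]).\<close>
definition winnable_from :: "nat \<Rightarrow> nat \<Rightarrow> nat set set \<Rightarrow> (nat \<Rightarrow> nat) \<Rightarrow> bool" where
  "winnable_from n l E f \<longleftrightarrow>
     (\<exists>t :: nat \<Rightarrow> nat. \<forall>u < n.
        (f u + (\<Sum>v \<in> {v. v < n \<and> u \<in> closed_nbhd E v}. t v)) mod l = 0)"

definition N_AW :: "nat \<Rightarrow> nat \<Rightarrow> nat set set \<Rightarrow> bool" where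
  "N_AW n l E \<longleftrightarrow> (\<forall>f :: nat \<Rightarrow> nat. (\<forall>u < n. f u < l) \<longrightarrow> winnable_from n l E f)"

text \<open>max(n,l): maximum number of edges of an N-AW graph on n vertices.\<close>
definition maxAW :: "nat \<Rightarrow> nat \<Rightarrow> nat" where
  "maxAW n l = Max {card E | E. simple_graph n E \<and> N_AW n l E}"

end

(*
  Upper bound: two vertices with the same closed neighbourhood receive the same
  toggles, so the labeling that is 1 on one of them and 0 elsewhere is never
  winnable. Hence an N-AW graph has at most one universal vertex; each of the
  other n - 1 vertices misses an edge of K_n, so at least n div 2 edges of K_n are
  missing.

  Lower bound: delete from K_n the 2 (n div 2) - 1 edges of the spider with centre
  0 and legs 0-1 and 0-(2i)-(2i+1). In the complement the closed neighbourhood of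
  u is everything except the spider neighbours of u, so the lights-out system
  becomes "sum of t over the spider neighbours of u = f u + sum of all t", which
  has an integer solution for every f. Integer solutions work modulo every l.
*)

theory Submission
  imports Defs
begin

definition complete_graph :: "nat \<Rightarrow> nat set set" where
  "complete_graph n = {{u, v} | u v. u < n \<and> v < n \<and> u \<noteq> v}"

lemma complete_graph_eq: "complete_graph n = {e. e \<subseteq> {..<n} \<and> card e = 2}"
  unfolding complete_graph_def by (auto simp: card_2_iff)

lemma finite_complete_graph: "finite (complete_graph n)"
  unfolding complete_graph_eq by (rule finite_subset[of _ "Pow {..<n}"]) auto

lemma card_complete_graph: "card (complete_graph n) = n choose 2"
  unfolding complete_graph_eq by (simp add: n_subsets)

lemma simple_graph_iff_subset_complete_graph: "simple_graph n E \<longleftrightarrow> E \<subseteq> complete_graph n"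
  unfolding simple_graph_def complete_graph_def ..

lemma card_Union_le_twice_card:
  assumes "\<forall>e\<in>D. card e = 2"
  shows "card (\<Union>D) \<le> 2 * card D"
proof -
  have "card (\<Union>D) \<le> sum card D" by (rule card_Union_le_sum_card)
  also have "\<dots> = 2 * card D" using assms by simp
  finally show ?thesis .
qed

lemma not_N_AW_if_closed_twins:
  assumes "l \<ge> 2" and "u < n" "v < n" "u \<noteq> v"
    and twins: "{w. w < n \<and> u \<in> closed_nbhd E w} = {w. w < n \<and> v \<in> closed_nbhd E w}"
  shows "\<not> N_AW n l E"
proof
  assume "N_AW n l E"
  then have "winnable_from n l E (\<lambda>x. if x = v then 1 else 0)"
    using assms(1) by (simp add: N_AW_def)
  then obtain t where t: "\<forall>x<n. ((if x = v then 1 else 0) +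
      (\<Sum>w\<in>{w. w < n \<and> x \<in> closed_nbhd E w}. t w)) mod l = 0"
    unfolding winnable_from_def by blast
  define s where "s = (\<Sum>w\<in>{w. w < n \<and> v \<in> closed_nbhd E w}. t w)"
  have "s mod l = 0" using t[rule_format, OF \<open>u < n\<close>] \<open>u \<noteq> v\<close> by (simp add: twins s_def)
  moreover have "(1 + s) mod l = 0" using t[rule_format, OF \<open>v < n\<close>] by (simp add: s_def)
  ultimately show False using assms(1) mod_add_right_eq[of 1 s l] by simp
qed

definition universal_vertices :: "nat \<Rightarrow> nat set set \<Rightarrow> nat set" where
  "universal_vertices n E = {u. u < n \<and> (\<forall>w<n. w \<noteq> u \<longrightarrow> {u, w} \<in> E)}"

lemma closed_nbhd_universal_vertex:
  assumes "u \<in> universal_vertices n E"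
  shows "{w. w < n \<and> u \<in> closed_nbhd E w} = {..<n}"
  using assms by (auto simp: universal_vertices_def closed_nbhd_def insert_commute)

lemma card_universal_vertices_le_1:
  assumes "N_AW n l E" "l \<ge> 2"
  shows "card (universal_vertices n E) \<le> 1"
proof -
  have "u = v" if "u \<in> universal_vertices n E" "v \<in> universal_vertices n E" for u v
    using not_N_AW_if_closed_twins[OF \<open>l \<ge> 2\<close>, of u n v E] assms(1) that
    by (auto simp: closed_nbhd_universal_vertex) (auto simp: universal_vertices_def)
  then show ?thesis
    by (simp add: card_le_Suc0_iff_eq universal_vertices_def)
qed

lemma card_le_if_N_AW:
  assumes "simple_graph n E" "N_AW n l E" "l \<ge> 2"
  shows "card E \<le> (n choose 2) - n div 2"
proof -
  define D where "D = complete_graph n - E"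
  have E_sub: "E \<subseteq> complete_graph n"
    using assms(1) by (simp add: simple_graph_iff_subset_complete_graph)
  then have card_E: "card E = (n choose 2) - card D"
    using card_mono[OF finite_complete_graph E_sub]
    by (simp add: D_def card_Diff_subset card_complete_graph
        finite_subset[OF _ finite_complete_graph])
  have "{..<n} - universal_vertices n E \<subseteq> \<Union>D"
    by (auto simp: D_def universal_vertices_def complete_graph_def)
  moreover have "finite (\<Union>D)"
    by (rule finite_subset[of _ "{..<n}"]) (auto simp: D_def complete_graph_def)
  ultimately have "card ({..<n} - universal_vertices n E) \<le> card (\<Union>D)"
    by (rule card_mono[rotated])
  moreover have "n - 1 \<le> card ({..<n} - universal_vertices n E)"
    using card_universal_vertices_le_1[OF assms(2,3)]
    by (simp add: card_Diff_subset universal_vertices_def subset_eq)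
  moreover have "card (\<Union>D) \<le> 2 * card D"
    by (rule card_Union_le_twice_card) (auto simp: D_def complete_graph_eq)
  ultimately have "n div 2 \<le> card D" by linarith
  then show ?thesis using card_E by simp
qed

lemma winnable_from_int:
  fixes t :: "nat \<Rightarrow> int"
  assumes "l > 0"
    and "\<forall>u<n. (int (f u) + (\<Sum>v\<in>{v. v < n \<and> u \<in> closed_nbhd E v}. t v)) mod int l = 0"
  shows "winnable_from n l E f"
  unfolding winnable_from_def
proof (intro exI allI impI)
  fix u assume "u < n"
  define S where "S = {v. v < n \<and> u \<in> closed_nbhd E v}"
  have "int ((f u + (\<Sum>v\<in>S. nat (t v mod int l))) mod l) =
      (int (f u) + (\<Sum>v\<in>S. t v mod int l)) mod int l"
    using assms(1) by (simp add: of_nat_mod)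
  also have "\<dots> = (int (f u) + (\<Sum>v\<in>S. t v)) mod int l"
    by (metis mod_add_right_eq mod_sum_eq)
  also have "\<dots> = 0" using assms(2) \<open>u < n\<close> by (simp add: S_def)
  finally show "(f u + (\<Sum>v\<in>{v. v < n \<and> u \<in> closed_nbhd E v}. nat (t v mod int l))) mod l = 0"
    by (simp add: S_def)
qed

lemma N_AW_empty: "l > 0 \<Longrightarrow> N_AW n l {}"
  unfolding N_AW_def
proof (intro allI impI)
  fix f :: "nat \<Rightarrow> nat"
  assume "l > 0"
  have "{v. v < n \<and> u \<in> closed_nbhd {} v} = {u}" if "u < n" for u
    using that by (auto simp: closed_nbhd_def)
  then show "winnable_from n l {} f"
    by (intro winnable_from_int[where t = "\<lambda>v. - int (f v)"] \<open>l > 0\<close>) simp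
qed

lemma closed_nbhd_complement:
  assumes "H \<subseteq> complete_graph n" "u < n"
  shows "{v. v < n \<and> u \<in> closed_nbhd (complete_graph n - H) v} =
    {..<n} - {v. {u, v} \<in> H}"
  using assms by (auto simp: closed_nbhd_def complete_graph_def insert_commute)

lemma N_AW_complement_if_solvable:
  assumes "H \<subseteq> complete_graph n" "l > 0"
    and solvable: "\<And>f :: nat \<Rightarrow> int.
      \<exists>t. \<forall>u<n. (\<Sum>v\<in>{v. {u, v} \<in> H}. t v) = f u + (\<Sum>v<n. t v)"
  shows "N_AW n l (complete_graph n - H)"
  unfolding N_AW_def
proof (intro allI impI)
  fix f :: "nat \<Rightarrow> nat"
  obtain t where t: "\<forall>u<n. (\<Sum>v\<in>{v. {u, v} \<in> H}. t v) = int (f u) + (\<Sum>v<n. t v)"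
    using solvable[of "\<lambda>u. int (f u)"] by blast
  have "(\<Sum>v\<in>{v. v < n \<and> u \<in> closed_nbhd (complete_graph n - H) v}. t v) = - int (f u)"
    if "u < n" for u
  proof -
    have "{v. {u, v} \<in> H} \<subseteq> {..<n}"
      using assms(1) by (auto simp: complete_graph_def doubleton_eq_iff)
    then show ?thesis
      using t \<open>u < n\<close> by (simp add: closed_nbhd_complement[OF assms(1) \<open>u < n\<close>] sum_diff)
  qed
  then show "winnable_from n l (complete_graph n - H) f"
    by (intro winnable_from_int[OF \<open>l > 0\<close>, where t = t]) simp
qed

definition spider :: "nat \<Rightarrow> nat set set" where
  "spider k = (\<lambda>i. {2 * i, 2 * i + 1}) ` {..<k} \<union> (\<lambda>i. {0, 2 * i}) ` {1..<k}"

lemma spider_edge_iff: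
  "{u, v} \<in> spider k \<longleftrightarrow> u \<noteq> v \<and> u < 2 * k \<and> v < 2 * k \<and>
     (u div 2 = v div 2 \<or> even u \<and> even v \<and> (u = 0 \<or> v = 0))"
proof
  assume "{u, v} \<in> spider k"
  then consider i where "i < k" "{u, v} = {2 * i, 2 * i + 1}"
    | i where "1 \<le> i" "i < k" "{u, v} = {0, 2 * i}"
    unfolding spider_def by fastforce
  then show "u \<noteq> v \<and> u < 2 * k \<and> v < 2 * k \<and>
     (u div 2 = v div 2 \<or> even u \<and> even v \<and> (u = 0 \<or> v = 0))"
    by cases (auto simp: doubleton_eq_iff)
next
  assume "u \<noteq> v \<and> u < 2 * k \<and> v < 2 * k \<and>
     (u div 2 = v div 2 \<or> even u \<and> even v \<and> (u = 0 \<or> v = 0))"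
  then consider "u div 2 = v div 2" "u \<noteq> v" "u < 2 * k"
    | "u = 0" "even v" "v \<noteq> 0" "v < 2 * k" | "v = 0" "even u" "u \<noteq> 0" "u < 2 * k"
    by auto
  then show "{u, v} \<in> spider k"
  proof cases
    case 1
    then have "{u, v} = {2 * (u div 2), 2 * (u div 2) + 1}" by (auto simp: doubleton_eq_iff)
    then show ?thesis using 1 unfolding spider_def by (auto intro!: imageI)
  next
    case 2
    then have "{u, v} = {0, 2 * (v div 2)}" "1 \<le> v div 2" "v div 2 < k" by auto
    then show ?thesis unfolding spider_def by (auto intro!: imageI)
  next
    case 3
    then have "{u, v} = {0, 2 * (u div 2)}" "1 \<le> u div 2" "u div 2 < k" by auto
    then show ?thesis unfolding spider_def by (auto intro!: imageI)
  qed
qed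

lemma spider_subset_complete_graph: "2 * k \<le> n \<Longrightarrow> spider k \<subseteq> complete_graph n"
  unfolding spider_def complete_graph_def by force

lemma card_spider_le: "card (spider k) \<le> 2 * k - 1"
proof -
  have "card (spider k) \<le>
      card ((\<lambda>i. {2 * i, 2 * i + 1}) ` {..<k}) + card ((\<lambda>i. {0, 2 * i}) ` {1..<k})"
    unfolding spider_def by (rule card_Un_le)
  also have "\<dots> \<le> k + (k - 1)"
    using card_image_le[of "{..<k}" "\<lambda>i. {2 * i, 2 * i + 1}"]
      card_image_le[of "{1..<k}" "\<lambda>i. {0, 2 * i}"]
    by simp
  finally show ?thesis by simp
qed

lemma spider_nbhd_odd:
  assumes "i < k" shows "{v. {2 * i + 1, v} \<in> spider k} = {2 * i}"
  using assms unfolding spider_edge_iff by auto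

lemma spider_nbhd_even:
  assumes "1 \<le> i" "i < k" shows "{v. {2 * i, v} \<in> spider k} = {0, 2 * i + 1}"
  using assms unfolding spider_edge_iff by auto

lemma spider_nbhd_center:
  assumes "1 \<le> k" shows "{v. {0, v} \<in> spider k} = insert 1 ((\<lambda>i. 2 * i) ` {1..<k})"
  using assms unfolding spider_edge_iff by auto

lemma spider_nbhd_outside:
  assumes "2 * k \<le> u" shows "{v. {u, v} \<in> spider k} = {}"
  using assms unfolding spider_edge_iff by auto

lemma sum_lessThan_even_odd:
  fixes g :: "nat \<Rightarrow> 'a::comm_monoid_add"
  shows "(\<Sum>v<2 * k. g v) = (\<Sum>i<k. g (2 * i)) + (\<Sum>i<k. g (2 * i + 1))"
  by (induction k) (simp_all add: algebra_simps)

text \<open>Solution of the spider system for a prescribed total \<open>s\<close>: the equation at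
  \<open>2i+1\<close> fixes \<open>t (2i)\<close>, the one at \<open>2i\<close> (\<open>i \<ge> 1\<close>) then fixes \<open>t (2i+1)\<close>, and the
  one at the centre fixes \<open>t 1\<close>. The actual total is \<open>2s + G\<close> for a constant \<open>G\<close>
  depending only on \<open>f\<close>, which pins down \<open>s\<close>.\<close>
definition spider_toggles :: "nat \<Rightarrow> (nat \<Rightarrow> int) \<Rightarrow> int \<Rightarrow> nat \<Rightarrow> int" where
  "spider_toggles k f s v =
     (if even v then s + f (v + 1)
      else if v = 1 then f 0 + s - (\<Sum>i\<in>{1..<k}. s + f (2 * i + 1))
      else f (v - 1) - f 1)"

lemma spider_toggles_nbhd:
  assumes "u < 2 * k"
  shows "(\<Sum>v\<in>{v. {u, v} \<in> spider k}. spider_toggles k f s v) = f u + s"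
proof -
  define i where "i = u div 2"
  have i: "i < k" using assms by (simp add: i_def less_mult_imp_div_less)
  have "u = 2 * i + 1 \<or> u = 0 \<or> u = 2 * i \<and> 1 \<le> i"
    unfolding i_def by presburger
  then consider "u = 2 * i + 1" | "u = 0" | "u = 2 * i" "1 \<le> i"
    by blast
  then show ?thesis
  proof cases
    case 1
    show ?thesis unfolding 1 spider_nbhd_odd[OF i] by (simp add: spider_toggles_def)
  next
    case 2
    have "1 \<notin> (\<lambda>i. 2 * i) ` {1..<k}" by auto
    then show ?thesis using i 2
      by (simp add: spider_nbhd_center sum.reindex inj_on_def spider_toggles_def)
  next
    case 3
    show ?thesis unfolding 3(1) spider_nbhd_even[OF 3(2) i]
      using 3(2) by (simp add: spider_toggles_def)
  qed
qed

lemma sum_spider_toggles: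
  assumes "1 \<le> k"
  shows "(\<Sum>v<2 * k. spider_toggles k f s v) =
    2 * s + (\<Sum>i<k. f (2 * i)) - (int k - 2) * f 1"
proof -
  have split0: "{..<k} = insert 0 {1..<k}" using assms by auto
  have odd: "spider_toggles k f s (2 * i + 1) = f (2 * i) - f 1" if "i \<in> {1..<k}" for i
    using that by (simp add: spider_toggles_def)
  have "(\<Sum>i<k. spider_toggles k f s (2 * i)) = int k * s + (\<Sum>i<k. f (2 * i + 1))"
    by (simp add: spider_toggles_def sum.distrib)
  moreover have "(\<Sum>i<k. spider_toggles k f s (2 * i + 1)) =
      f 0 + s - (\<Sum>i\<in>{1..<k}. s + f (2 * i + 1)) + (\<Sum>i\<in>{1..<k}. f (2 * i) - f 1)"
    unfolding split0 by (simp add: odd spider_toggles_def)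
  ultimately show ?thesis
    using assms unfolding sum_lessThan_even_odd split0
    by (simp add: sum.distrib sum_subtractf algebra_simps)
qed

lemma spider_complement_solvable:
  fixes f :: "nat \<Rightarrow> int"
  assumes "2 \<le> n"
  shows "\<exists>t. \<forall>u<n. (\<Sum>v\<in>{v. {u, v} \<in> spider (n div 2)}. t v) = f u + (\<Sum>v<n. t v)"
proof -
  define k where "k = n div 2"
  have "1 \<le> k" using assms by (simp add: k_def)
  define G where "G = (\<Sum>i<k. f (2 * i)) - (int k - 2) * f 1"
  show ?thesis
  proof (cases "even n")
    case True
    then have n: "n = 2 * k" by (simp add: k_def)
    define t where "t = spider_toggles k f (- G)"
    have sum_t: "(\<Sum>v<n. t v) = - G"
      unfolding n t_def sum_spider_toggles[OF \<open>1 \<le> k\<close>] by (simp add: G_def)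
    have "(\<Sum>v\<in>{v. {u, v} \<in> spider k}. t v) = f u + (\<Sum>v<n. t v)" if "u < n" for u
      using spider_toggles_nbhd[of u k f "- G"] that sum_t by (simp add: n t_def)
    then show ?thesis unfolding k_def by blast
  next
    case False
    then have n: "n = 2 * k + 1" by (simp add: k_def)
    \<comment> \<open>The vertex \<open>2k\<close> is isolated in the spider, which forces the total \<open>s\<close>;
      its own toggle count then adjusts the actual total to \<open>s\<close>.\<close>
    define s where "s = - f (2 * k)"
    define t where "t = (spider_toggles k f s)(2 * k := - s - G)"
    have t_below: "t v = spider_toggles k f s v" if "v < 2 * k" for v
      using that by (simp add: t_def)
    have "(\<Sum>v<n. t v) = (\<Sum>v<2 * k. spider_toggles k f s v) + t (2 * k)"
      unfolding n by (simp add: t_below)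
    also have "\<dots> = s"
      unfolding sum_spider_toggles[OF \<open>1 \<le> k\<close>] by (simp add: t_def G_def)
    finally have sum_t: "(\<Sum>v<n. t v) = s" .
    have "(\<Sum>v\<in>{v. {u, v} \<in> spider k}. t v) = f u + s" if "u < n" for u
    proof (cases "u < 2 * k")
      case True
      have "{v. {u, v} \<in> spider k} \<subseteq> {..<2 * k}" by (auto simp: spider_edge_iff)
      then have "(\<Sum>v\<in>{v. {u, v} \<in> spider k}. t v) =
          (\<Sum>v\<in>{v. {u, v} \<in> spider k}. spider_toggles k f s v)"
        by (intro sum.cong) (auto simp: t_below)
      then show ?thesis using spider_toggles_nbhd[OF True] by simp
    next
      case False
      then have "u = 2 * k" using \<open>u < n\<close> n by simp
      then show ?thesis by (simp add: spider_nbhd_outside s_def)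
    qed
    then show ?thesis using sum_t unfolding k_def by auto
  qed
qed

lemma N_AW_complement_spider:
  assumes "2 \<le> n" "l > 0"
  shows "N_AW n l (complete_graph n - spider (n div 2))"
  using spider_subset_complete_graph \<open>l > 0\<close> spider_complement_solvable[OF \<open>2 \<le> n\<close>]
  by (rule N_AW_complement_if_solvable) simp

lemma card_complement_spider_ge:
  "(n choose 2) - (n - 1) \<le> card (complete_graph n - spider (n div 2))"
proof -
  have "(n choose 2) - (n - 1) \<le> card (complete_graph n) - card (spider (n div 2))"
    using card_spider_le[of "n div 2"] by (simp add: card_complete_graph)
  also have "\<dots> \<le> card (complete_graph n - spider (n div 2))"
    by (rule diff_card_le_card_Diff) (simp add: spider_def)
  finally show ?thesis .
qed

lemma finite_N_AW_edge_counts: "finite {card E | E. simple_graph n E \<and> N_AW n l E}"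
proof (rule finite_subset)
  show "{card E | E. simple_graph n E \<and> N_AW n l E} \<subseteq> {..card (complete_graph n)}"
    using card_mono[OF finite_complete_graph]
    by (auto simp: simple_graph_iff_subset_complete_graph)
qed simp

lemma card_le_maxAW: "simple_graph n E \<Longrightarrow> N_AW n l E \<Longrightarrow> card E \<le> maxAW n l"
  unfolding maxAW_def by (rule Max_ge[OF finite_N_AW_edge_counts]) blast

lemma maxAW_attained:
  assumes "l > 0"
  obtains E where "simple_graph n E" "N_AW n l E" "maxAW n l = card E"
proof -
  have "simple_graph n {}" by (simp add: simple_graph_def)
  then have "{card E | E. simple_graph n E \<and> N_AW n l E} \<noteq> {}"
    using N_AW_empty[OF assms] by blast
  then show ?thesis
    using Max_in[OF finite_N_AW_edge_counts] that unfolding maxAW_def by blast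
qed

theorem proposition4p1:
  fixes n l :: nat
  assumes "n \<ge> 1" and "l \<ge> 2"
  shows "(n choose 2) - (n - 1) \<le> maxAW n l \<and> maxAW n l \<le> (n choose 2) - n div 2"
proof
  have "l > 0" using assms(2) by simp
  show "(n choose 2) - (n - 1) \<le> maxAW n l"
  proof (cases "n = 1")
    case False
    then have "2 \<le> n" using assms(1) by simp
    have "simple_graph n (complete_graph n - spider (n div 2))"
      by (auto simp: simple_graph_iff_subset_complete_graph)
    then show ?thesis
      using card_le_maxAW N_AW_complement_spider[OF \<open>2 \<le> n\<close> \<open>l > 0\<close>]
        card_complement_spider_ge
      by (blast intro: le_trans)
  qed (simp add: binomial_eq_0)
  obtain E where "simple_graph n E" "N_AW n l E" "maxAW n l = card E"
    using maxAW_attained[OF \<open>l > 0\<close>] .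
  then show "maxAW n l \<le> (n choose 2) - n div 2"
    using card_le_if_N_AW assms(2) by simp
qed

end
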